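(* Fix $C<1$ and let $C_u=C+\alpha_n$. There is an integer $N\ge1$ such that $C_u<1$ for all $n\ge N$, and for all $n\ge N$, all $1\le i\le n$ and all $1\le t\le n$, \[ \mathbb{E}(\#\mathcal{N}_t(i))\le C_u^t\qquad\text{and}\qquad\mathbb{E}\big((\#\mathcal{N}_t(i))^2\big)\le\frac{C_u^t}{1-C_u}. \]
   Context: Let $C>0$ be a constant and $(\alpha_n)_{n\ge1}$ a sequence of nonnegative reals with $\alpha_n\to0$. For each $n$, consider the complete graph $K_n$ on vertex set $\{1,\dots,n\}$; each edge $e$ of $K_n$ is independently open with probability $p_n(e)$ and closed otherwise, where $\frac{C-\alpha_n}{n}\le p_n(e)\le\frac{C+\alpha_n}{n}$ for every edge $e$. Let $G$ be the resulting random graph of open edges, with probability measure $\mathbb{P}$ and expectation $\mathbb{E}$. For a vertex $i$ and integer $t\ge1$, $\mathcal{N}_t(i)$ is the set of vertices at graph distance exactly $t$ from $i$ in $G$ (distance = least number of open edges in a path joining them), and $\#\mathcal{N}_t(i)$ its cardinality. *)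

theory Defs
  imports "HOL-Probability.Probability"
begin

definition Kn_edges :: "nat \<Rightarrow> nat set set" where
  "Kn_edges n = {{i, j} | i j. i \<in> {1..n} \<and> j \<in> {1..n} \<and> i \<noteq> j}"

definition random_graph :: "nat \<Rightarrow> (nat set \<Rightarrow> real) \<Rightarrow> nat set set pmf" where
  "random_graph n p =
     map_pmf (\<lambda>f. {e \<in> Kn_edges n. f e})
             (Pi_pmf (Kn_edges n) False (\<lambda>e. bernoulli_pmf (p e)))"

definition walk_len :: "nat set set \<Rightarrow> nat \<Rightarrow> nat \<Rightarrow> nat \<Rightarrow> bool" where
  "walk_len G k i j \<longleftrightarrow>
     (\<exists>f :: nat \<Rightarrow> nat. f 0 = i \<and> f k = j \<and> (\<forall>m<k. {f m, f (Suc m)} \<in> G))"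

definition nbhd :: "nat set set \<Rightarrow> nat \<Rightarrow> nat \<Rightarrow> nat \<Rightarrow> nat set" where
  "nbhd G n t i = {j \<in> {1..n}. walk_len G t i j \<and> (\<forall>s<t. \<not> walk_len G s i j)}"

end

theory Submission
  imports Defs
begin

text \<open>
  Choose a shortest walk from i to every vertex at distance t. The vertices of such a geodesic
  are pairwise distinct, so \#N_t(i) is at most the number of labelled paths of length t
  rooted at i all of whose edges are open; there are at most n^t such vertex lists and each
  is open with probability at most ((C + \<alpha>_n)/n)^t. For the second moment, a pair (j, k)
  is encoded by the geodesic to j followed by the part of the geodesic to k after it last
  meets the first one, at depth r. This is a labelled tree with 2t - r edges rooted at i, so
  E((\#N_t(i))^2) is at most the sum over r \<le> t of C_u^(2t - r) \<le> C_u^t / (1 - C_u).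
\<close>

subsection \<open>Open edge sets of the random graph\<close>

lemma finite_Kn_edges: "finite (Kn_edges n)"
proof -
  have "Kn_edges n \<subseteq> Pow {1..n}" unfolding Kn_edges_def by auto
  thus ?thesis by (rule finite_subset) auto
qed

lemma Kn_edges_vertex: "e \<in> Kn_edges n \<Longrightarrow> x \<in> e \<Longrightarrow> x \<in> {1..n}"
  unfolding Kn_edges_def by auto

lemma set_pmf_random_graph: "set_pmf (random_graph n p) \<subseteq> Pow (Kn_edges n)"
  unfolding random_graph_def by auto

lemma finite_set_pmf_random_graph: "finite (set_pmf (random_graph n p))"
  using set_pmf_random_graph finite_Kn_edges by (metis finite_Pow_iff finite_subset)

lemma integrable_random_graph: "integrable (random_graph n p) (f :: _ \<Rightarrow> real)"
  by (rule integrable_measure_pmf_finite[OF finite_set_pmf_random_graph])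

lemma expectation_random_graph_mono:
  assumes "\<And>G. G \<subseteq> Kn_edges n \<Longrightarrow> f G \<le> (g G :: real)"
  shows "measure_pmf.expectation (random_graph n p) f \<le> measure_pmf.expectation (random_graph n p) g"
  using assms set_pmf_random_graph
  by (intro integral_mono_AE integrable_random_graph AE_pmfI) blast

lemma expectation_random_graph_edges_open:
  assumes S: "S \<subseteq> Kn_edges n" and p: "\<And>e. e \<in> Kn_edges n \<Longrightarrow> 0 \<le> p e \<and> p e \<le> 1"
  shows "measure_pmf.expectation (random_graph n p) (\<lambda>G. if S \<subseteq> G then 1 else 0 :: real)
           = (\<Prod>e\<in>S. p e)"
proof -
  let ?K = "Kn_edges n"
  let ?g = "\<lambda>e (b::bool). if e \<in> S then (if b then 1 else 0) else (1::real)"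
  have indicator_prod: "(if S \<subseteq> {e \<in> ?K. f e} then 1 else 0) = (\<Prod>e\<in>?K. ?g e (f e))" for f
  proof (cases "\<forall>e\<in>S. f e")
    case True
    then show ?thesis using S by (auto intro!: prod.neutral)
  next
    case False
    then obtain e where "e \<in> S" "\<not> f e" by auto
    then show ?thesis using S finite_Kn_edges by (auto intro!: prod_zero[symmetric] bexI[of _ e])
  qed
  have "measure_pmf.expectation (random_graph n p) (\<lambda>G. if S \<subseteq> G then 1 else 0 :: real)
      = measure_pmf.expectation (Pi_pmf ?K False (\<lambda>e. bernoulli_pmf (p e)))
          (\<lambda>f. \<Prod>e\<in>?K. ?g e (f e))"
    unfolding random_graph_def integral_map_pmf indicator_prod ..
  also have "\<dots> = (\<Prod>e\<in>?K. measure_pmf.expectation (bernoulli_pmf (p e)) (?g e))"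
    by (rule expectation_prod_Pi_pmf) (auto simp: finite_Kn_edges integrable_measure_pmf_finite)
  also have "\<dots> = (\<Prod>e\<in>?K. if e \<in> S then p e else 1)"
    using p by (intro prod.cong) auto
  also have "\<dots> = (\<Prod>e\<in>S. p e)"
    using S finite_Kn_edges by (simp add: prod.If_cases Int_absorb1 Int_absorb2)
  finally show ?thesis .
qed

subsection \<open>Open labelled trees rooted at a vertex\<close>

text \<open>
  A list xs of L + 1 distinct vertices together with a parent map par (with par m < m)
  describes a labelled tree rooted at xs!0: vertex xs!m is joined to its parent xs!(par m).
\<close>

definition tree_edges :: "(nat \<Rightarrow> nat) \<Rightarrow> nat \<Rightarrow> nat list \<Rightarrow> nat set set" where
  "tree_edges par L xs = (\<lambda>m. {xs!m, xs!(par m)}) ` {1..L}"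

definition rooted_lists :: "nat \<Rightarrow> nat \<Rightarrow> nat \<Rightarrow> nat list set" where
  "rooted_lists n i L = {xs. length xs = Suc L \<and> distinct xs \<and> set xs \<subseteq> {1..n} \<and> xs!0 = i}"

definition open_trees :: "nat set set \<Rightarrow> nat \<Rightarrow> nat \<Rightarrow> nat \<Rightarrow> (nat \<Rightarrow> nat) \<Rightarrow> nat list set" where
  "open_trees G n i L par = {xs \<in> rooted_lists n i L. tree_edges par L xs \<subseteq> G}"

lemma rooted_lists_subset:
  "rooted_lists n i L \<subseteq> (\<lambda>ys. i # ys) ` {ys. set ys \<subseteq> {1..n} \<and> length ys = L}"
proof
  fix xs assume "xs \<in> rooted_lists n i L"
  then have "length xs = Suc L" "set xs \<subseteq> {1..n}" "xs!0 = i" unfolding rooted_lists_def by auto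
  then show "xs \<in> (\<lambda>ys. i # ys) ` {ys. set ys \<subseteq> {1..n} \<and> length ys = L}"
    by (cases xs) auto
qed

lemma finite_rooted_lists: "finite (rooted_lists n i L)"
  by (rule finite_subset[OF rooted_lists_subset]) (auto intro: finite_lists_length_eq)

lemma card_rooted_lists_le: "card (rooted_lists n i L) \<le> n ^ L"
proof -
  have "card (rooted_lists n i L)
      \<le> card ((\<lambda>ys. i # ys) ` {ys. set ys \<subseteq> {1..n} \<and> length ys = L})"
    by (rule card_mono[OF _ rooted_lists_subset]) (auto intro: finite_lists_length_eq)
  also have "\<dots> \<le> card {ys. set ys \<subseteq> {1..n} \<and> length ys = L}"
    by (rule card_image_le) (auto intro: finite_lists_length_eq)
  also have "\<dots> = n ^ L" by (simp add: card_lists_length_eq)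
  finally show ?thesis .
qed

lemma finite_open_trees: "finite (open_trees G n i L par)"
  unfolding open_trees_def by (rule finite_subset[OF _ finite_rooted_lists[of n i L]]) auto

lemma
  assumes xs: "xs \<in> rooted_lists n i L" and par: "\<And>m. m \<in> {1..L} \<Longrightarrow> par m < m"
  shows tree_edges_subset_Kn_edges: "tree_edges par L xs \<subseteq> Kn_edges n"
    and card_tree_edges: "card (tree_edges par L xs) = L"
proof -
  have len: "length xs = Suc L" and dist: "distinct xs" and range: "set xs \<subseteq> {1..n}"
    using xs unfolding rooted_lists_def by auto
  show "tree_edges par L xs \<subseteq> Kn_edges n"
  proof
    fix e assume "e \<in> tree_edges par L xs"
    then obtain m where m: "m \<in> {1..L}" "e = {xs!m, xs!(par m)}" unfolding tree_edges_def by auto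
    have "par m < m" using par m(1) by auto
    hence lt: "m < length xs" "par m < length xs" using m len by auto
    have "xs!m \<noteq> xs!(par m)" using dist lt \<open>par m < m\<close> by (simp add: nth_eq_iff_index_eq)
    moreover have "xs!m \<in> {1..n}" "xs!(par m) \<in> {1..n}" using range lt by (auto dest: nth_mem)
    ultimately show "e \<in> Kn_edges n" using m unfolding Kn_edges_def by blast
  qed
  have "inj_on (\<lambda>m. {xs!m, xs!(par m)}) {1..L}"
  proof
    fix a b assume a: "a \<in> {1..L}" and b: "b \<in> {1..L}"
      and eq: "{xs!a, xs!(par a)} = {xs!b, xs!(par b)}"
    have pa: "par a < a" and pb: "par b < b" using par a b by auto
    have la: "a < length xs" "par a < length xs" and lb: "b < length xs" "par b < length xs"
      using a b pa pb len by auto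
    from eq have "xs!a = xs!b \<or> (xs!a = xs!(par b) \<and> xs!(par a) = xs!b)"
      by (auto simp: doubleton_eq_iff)
    then show "a = b"
    proof
      assume "xs!a = xs!b" then show ?thesis using dist la lb by (simp add: nth_eq_iff_index_eq)
    next
      assume h: "xs!a = xs!(par b) \<and> xs!(par a) = xs!b"
      have "a = par b" using h dist la lb by (simp add: nth_eq_iff_index_eq)
      moreover have "par a = b" using h dist la(2) lb(1) nth_eq_iff_index_eq by metis
      ultimately show ?thesis using pa pb by simp
    qed
  qed
  then show "card (tree_edges par L xs) = L" unfolding tree_edges_def by (simp add: card_image)
qed

lemma expectation_card_open_trees_le:
  assumes p: "\<And>e. e \<in> Kn_edges n \<Longrightarrow> 0 \<le> p e \<and> p e \<le> 1"
    and p_le: "\<And>e. e \<in> Kn_edges n \<Longrightarrow> p e \<le> q" and q: "0 \<le> q"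
    and par: "\<And>m. m \<in> {1..L} \<Longrightarrow> par m < m"
  shows "measure_pmf.expectation (random_graph n p) (\<lambda>G. real (card (open_trees G n i L par)))
           \<le> (real n * q) ^ L"
proof -
  let ?U = "rooted_lists n i L"
  have card_eq: "real (card (open_trees G n i L par))
                   = (\<Sum>xs\<in>?U. if tree_edges par L xs \<subseteq> G then 1 else 0)" for G
    using sum.inter_filter[OF finite_rooted_lists, of "\<lambda>_. 1 :: real"]
    unfolding open_trees_def by simp
  have "measure_pmf.expectation (random_graph n p) (\<lambda>G. real (card (open_trees G n i L par)))
     = (\<Sum>xs\<in>?U. measure_pmf.expectation (random_graph n p)
                  (\<lambda>G. if tree_edges par L xs \<subseteq> G then 1 else 0 :: real))"
    unfolding card_eq by (rule Bochner_Integration.integral_sum) (rule integrable_random_graph)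
  also have "\<dots> = (\<Sum>xs\<in>?U. \<Prod>e\<in>tree_edges par L xs. p e)"
    using tree_edges_subset_Kn_edges[OF _ par]
    by (intro sum.cong refl expectation_random_graph_edges_open p) auto
  also have "\<dots> \<le> (\<Sum>xs\<in>?U. q ^ L)"
  proof (rule sum_mono)
    fix xs assume xs: "xs \<in> ?U"
    have "(\<Prod>e\<in>tree_edges par L xs. p e) \<le> (\<Prod>e\<in>tree_edges par L xs. q)"
      using tree_edges_subset_Kn_edges[OF xs par] p p_le by (intro prod_mono) auto
    then show "(\<Prod>e\<in>tree_edges par L xs. p e) \<le> q ^ L"
      using card_tree_edges[OF xs par] by simp
  qed
  also have "\<dots> \<le> real n ^ L * q ^ L"
    using card_rooted_lists_le[of n i L] q by (simp add: mult_right_mono flip: of_nat_power)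
  finally show ?thesis by (simp add: power_mult_distrib)
qed

subsection \<open>Walks and geodesics\<close>

lemma walk_len_append:
  assumes "walk_len G a x y" "walk_len G b y z" shows "walk_len G (a + b) x z"
proof -
  obtain f where f: "f 0 = x" "f a = y" "\<forall>m<a. {f m, f (Suc m)} \<in> G"
    using assms(1) unfolding walk_len_def by blast
  obtain g where g: "g 0 = y" "g b = z" "\<forall>m<b. {g m, g (Suc m)} \<in> G"
    using assms(2) unfolding walk_len_def by blast
  define h where "h k = (if k \<le> a then f k else g (k - a))" for k
  have "h 0 = x" "h (a + b) = z" using f g by (auto simp: h_def)
  moreover have "{h m, h (Suc m)} \<in> G" if m: "m < a + b" for m
  proof (cases "m < a")
    case True then show ?thesis using f by (auto simp: h_def)
  next
    case False
    then have "h m = g (m - a)" "h (Suc m) = g (Suc (m - a))"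
      using f g by (auto simp: h_def Suc_diff_le)
    then show ?thesis using g m False by auto
  qed
  ultimately show ?thesis unfolding walk_len_def by blast
qed

lemma walk_len_prefix:
  assumes "f 0 = i" "\<forall>m<t. {f m, f (Suc m)} \<in> G" "m \<le> t" shows "walk_len G m i (f m)"
  using assms unfolding walk_len_def by (intro exI[of _ f]) auto

lemma walk_len_suffix:
  assumes "\<forall>m<t. {f m, f (Suc m)} \<in> G" "m \<le> t" shows "walk_len G (t - m) (f m) (f t)"
  using assms unfolding walk_len_def by (intro exI[of _ "\<lambda>k. f (m + k)"]) auto

lemma walk_vertex_in_range:
  assumes G: "G \<subseteq> Kn_edges n" and f: "\<forall>m<t. {f m, f (Suc m)} \<in> G" and "1 \<le> t" "m \<le> t"
  shows "f m \<in> {1..n}"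
proof (cases "m < t")
  case True then show ?thesis using f G Kn_edges_vertex[of "{f m, f (Suc m)}" n "f m"] by auto
next
  case False
  then have "m = Suc (m - 1)" "m - 1 < t" using assms by auto
  then show ?thesis using f G Kn_edges_vertex[of "{f (m-1), f (Suc (m-1))}" n "f m"]
    by (metis in_mono insertI1 insert_commute)
qed

definition dist_is :: "nat set set \<Rightarrow> nat \<Rightarrow> nat \<Rightarrow> nat \<Rightarrow> bool" where
  "dist_is G i m v \<longleftrightarrow> walk_len G m i v \<and> (\<forall>s<m. \<not> walk_len G s i v)"

lemma dist_is_unique: "dist_is G i a v \<Longrightarrow> dist_is G i b v \<Longrightarrow> a = b"
  unfolding dist_is_def by (metis linorder_neqE_nat)

lemma dist_is_shortest_walk_vertex:
  assumes f0: "f 0 = i" and f: "\<forall>m<t. {f m, f (Suc m)} \<in> G"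
    and shortest: "\<forall>s<t. \<not> walk_len G s i (f t)" and m: "m \<le> t"
  shows "dist_is G i m (f m)"
  unfolding dist_is_def
proof (intro conjI allI impI notI)
  show "walk_len G m i (f m)" by (rule walk_len_prefix[OF f0 f m])
  fix s assume "s < m" "walk_len G s i (f m)"
  from walk_len_append[OF this(2) walk_len_suffix[OF f m]] have "walk_len G (s + (t - m)) i (f t)" .
  moreover have "s + (t - m) < t" using \<open>s < m\<close> m by simp
  ultimately show False using shortest by blast
qed

definition geodesic :: "nat set set \<Rightarrow> nat \<Rightarrow> nat \<Rightarrow> nat \<Rightarrow> nat \<Rightarrow> nat" where
  "geodesic G i t j = (SOME f. f 0 = i \<and> f t = j \<and> (\<forall>m<t. {f m, f (Suc m)} \<in> G))"

lemma
  assumes "j \<in> nbhd G n t i"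
  shows geodesic_start: "geodesic G i t j 0 = i"
    and geodesic_end: "geodesic G i t j t = j"
    and geodesic_edge: "\<forall>m<t. {geodesic G i t j m, geodesic G i t j (Suc m)} \<in> G"
proof -
  have "\<exists>f. f 0 = i \<and> f t = j \<and> (\<forall>m<t. {f m, f (Suc m)} \<in> G)"
    using assms unfolding nbhd_def walk_len_def by blast
  from someI_ex[OF this] show "geodesic G i t j 0 = i" "geodesic G i t j t = j"
    "\<forall>m<t. {geodesic G i t j m, geodesic G i t j (Suc m)} \<in> G"
    unfolding geodesic_def by auto
qed

lemma dist_is_geodesic:
  assumes j: "j \<in> nbhd G n t i" and "m \<le> t" shows "dist_is G i m (geodesic G i t j m)"
  using dist_is_shortest_walk_vertex[OF geodesic_start[OF j] geodesic_edge[OF j]] assms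
  unfolding nbhd_def geodesic_end[OF j] by blast

lemma inj_on_geodesic:
  assumes "j \<in> nbhd G n t i" shows "inj_on (geodesic G i t j) {0..t}"
  using dist_is_geodesic[OF assms] dist_is_unique unfolding inj_on_def by (metis atLeastAtMost_iff)

lemma geodesic_in_range:
  assumes "j \<in> nbhd G n t i" "G \<subseteq> Kn_edges n" "1 \<le> t" "m \<le> t"
  shows "geodesic G i t j m \<in> {1..n}"
  using walk_vertex_in_range[OF assms(2) geodesic_edge[OF assms(1)] assms(3,4)] .

definition geodesic_list :: "nat set set \<Rightarrow> nat \<Rightarrow> nat \<Rightarrow> nat \<Rightarrow> nat list" where
  "geodesic_list G i t j = map (geodesic G i t j) [0..<Suc t]"

lemma geodesic_list_nth: "m \<le> t \<Longrightarrow> geodesic_list G i t j ! m = geodesic G i t j m"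
  unfolding geodesic_list_def by (simp add: nth_map_upt del: upt_Suc)

lemma geodesic_list_in_rooted_lists:
  assumes "j \<in> nbhd G n t i" "G \<subseteq> Kn_edges n" "1 \<le> t"
  shows "geodesic_list G i t j \<in> rooted_lists n i t"
  unfolding rooted_lists_def geodesic_list_def
  using inj_on_geodesic[OF assms(1)] geodesic_in_range[OF assms] geodesic_start[OF assms(1)]
  by (auto simp: distinct_map atLeastLessThanSuc_atLeastAtMost simp del: upt_Suc)

lemma card_nbhd_le_card_open_paths:
  assumes G: "G \<subseteq> Kn_edges n" and t: "1 \<le> t"
  shows "card (nbhd G n t i) \<le> card (open_trees G n i t (\<lambda>m. m - 1))"
proof (rule card_inj_on_le[OF _ _ finite_open_trees])
  show "inj_on (geodesic_list G i t) (nbhd G n t i)"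
    by (rule inj_onI) (metis geodesic_end geodesic_list_nth order_refl)
  show "geodesic_list G i t ` nbhd G n t i \<subseteq> open_trees G n i t (\<lambda>m. m - 1)"
  proof clarify
    fix j assume j: "j \<in> nbhd G n t i"
    have "{geodesic_list G i t j ! m, geodesic_list G i t j ! (m - 1)} \<in> G" if "m \<in> {1..t}" for m
      using that geodesic_edge[OF j, rule_format, of "m - 1"]
      by (auto simp: geodesic_list_nth insert_commute)
    then show "geodesic_list G i t j \<in> open_trees G n i t (\<lambda>m. m - 1)"
      using geodesic_list_in_rooted_lists[OF j G t]
      unfolding open_trees_def tree_edges_def by auto
  qed
qed

subsection \<open>Pairs of vertices at distance t as open trees\<close>

text \<open>
  For j, k \<in> N_t(i), the geodesic to k meets the geodesic to j for the last time at depth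
  branch_depth, necessarily in the same vertex (distances from i agree).
\<close>

definition branch_depth :: "nat set set \<Rightarrow> nat \<Rightarrow> nat \<Rightarrow> nat \<Rightarrow> nat \<Rightarrow> nat" where
  "branch_depth G i t j k = Max {m \<in> {0..t}. geodesic G i t k m \<in> geodesic G i t j ` {0..t}}"

definition merged_tree :: "nat set set \<Rightarrow> nat \<Rightarrow> nat \<Rightarrow> nat \<Rightarrow> nat \<Rightarrow> nat list" where
  "merged_tree G i t j k =
     geodesic_list G i t j @ map (geodesic G i t k) [Suc (branch_depth G i t j k)..<Suc t]"

definition merge_parent :: "nat \<Rightarrow> nat \<Rightarrow> nat \<Rightarrow> nat" where
  "merge_parent t r m = (if m = Suc t then r else m - 1)"

lemma merge_parent_less: "r \<le> t \<Longrightarrow> m \<in> {1..t + (t - r)} \<Longrightarrow> merge_parent t r m < m"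
  unfolding merge_parent_def by auto

lemma
  assumes j: "j \<in> nbhd G n t i" and k: "k \<in> nbhd G n t i"
  shows branch_depth_le: "branch_depth G i t j k \<le> t"
    and geodesic_branch_depth:
      "geodesic G i t k (branch_depth G i t j k) = geodesic G i t j (branch_depth G i t j k)"
    and geodesic_after_branch_depth: "\<And>m. branch_depth G i t j k < m \<Longrightarrow> m \<le> t \<Longrightarrow>
      geodesic G i t k m \<notin> geodesic G i t j ` {0..t}"
proof -
  let ?f = "geodesic G i t j" and ?g = "geodesic G i t k" and ?r = "branch_depth G i t j k"
  let ?S = "{m \<in> {0..t}. ?g m \<in> ?f ` {0..t}}"
  have "0 \<in> ?S" using geodesic_start[OF j] geodesic_start[OF k] by force
  then have r: "?r \<in> ?S" unfolding branch_depth_def by (intro Max_in) auto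
  then show "?r \<le> t" by auto
  from r obtain r' where r': "r' \<le> t" "?g ?r = ?f r'" by auto
  have "?r = r'"
    using dist_is_geodesic[OF k, of ?r] dist_is_geodesic[OF j r'(1)] r r'(2) dist_is_unique
    by auto
  then show "?g ?r = ?f ?r" using r' by simp
  fix m assume m: "?r < m" "m \<le> t"
  show "?g m \<notin> ?f ` {0..t}"
  proof
    assume "?g m \<in> ?f ` {0..t}"
    then have "m \<le> ?r" unfolding branch_depth_def using m by (intro Max_ge) auto
    with m show False by simp
  qed
qed

lemma length_merged_tree: "length (merged_tree G i t j k) = Suc t + (t - branch_depth G i t j k)"
  unfolding merged_tree_def geodesic_list_def by (simp; arith)

lemma merged_tree_nth_low: "m \<le> t \<Longrightarrow> merged_tree G i t j k ! m = geodesic G i t j m"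
  unfolding merged_tree_def geodesic_list_def by (simp add: nth_append nth_map_upt del: upt_Suc)

lemma merged_tree_nth_high: "Suc t \<le> m \<Longrightarrow> m < Suc t + (t - branch_depth G i t j k) \<Longrightarrow>
    merged_tree G i t j k ! m = geodesic G i t k (Suc (branch_depth G i t j k) + (m - Suc t))"
  unfolding merged_tree_def geodesic_list_def by (simp add: nth_append nth_map_upt del: upt_Suc)

lemma last_merged_tree:
  assumes j: "j \<in> nbhd G n t i" and k: "k \<in> nbhd G n t i"
  shows "last (merged_tree G i t j k) = k"
proof -
  let ?r = "branch_depth G i t j k"
  have "merged_tree G i t j k \<noteq> []" using length_merged_tree[of G i t j k] by auto
  then have "last (merged_tree G i t j k) = merged_tree G i t j k ! (t + (t - ?r))"
    using length_merged_tree[of G i t j k] by (simp add: last_conv_nth)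
  also have "\<dots> = k"
  proof (cases "?r < t")
    case True
    then have "merged_tree G i t j k ! (t + (t - ?r)) = geodesic G i t k t"
      using merged_tree_nth_high[of t "t + (t - ?r)" G i j k] by simp
    then show ?thesis using geodesic_end[OF k] by simp
  next
    case False
    then have "?r = t" using branch_depth_le[OF j k] by simp
    then show ?thesis using geodesic_branch_depth[OF j k] merged_tree_nth_low[of t t G i j k]
      geodesic_end[OF k] by simp
  qed
  finally show ?thesis .
qed

lemma merged_tree_in_rooted_lists:
  assumes j: "j \<in> nbhd G n t i" and k: "k \<in> nbhd G n t i" and G: "G \<subseteq> Kn_edges n"
    and t: "1 \<le> t"
  shows "merged_tree G i t j k \<in> rooted_lists n i (t + (t - branch_depth G i t j k))"
proof -
  let ?g = "geodesic G i t k" and ?r = "branch_depth G i t j k"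
  have path: "geodesic_list G i t j \<in> rooted_lists n i t"
    using geodesic_list_in_rooted_lists[OF j G t] .
  have "inj_on ?g {Suc ?r..<Suc t}" using inj_on_geodesic[OF k] by (rule inj_on_subset) auto
  then have "distinct (map ?g [Suc ?r..<Suc t])" by (simp add: distinct_map del: upt_Suc)
  moreover have "set (geodesic_list G i t j) \<inter> set (map ?g [Suc ?r..<Suc t]) = {}"
    using geodesic_after_branch_depth[OF j k]
    by (auto simp: geodesic_list_def simp del: upt_Suc) (metis Suc_le_eq atLeastAtMost_iff image_eqI le0 less_Suc_eq_le)
  moreover have "set (map ?g [Suc ?r..<Suc t]) \<subseteq> {1..n}"
    using geodesic_in_range[OF k G t] by (auto simp del: upt_Suc)
  ultimately show ?thesis
    using path length_merged_tree[of G i t j k]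
    unfolding rooted_lists_def merged_tree_def by (auto simp: nth_append)
qed

lemma tree_edges_merged_tree_subset:
  assumes j: "j \<in> nbhd G n t i" and k: "k \<in> nbhd G n t i"
  defines "r \<equiv> branch_depth G i t j k"
  shows "tree_edges (merge_parent t r) (t + (t - r)) (merged_tree G i t j k) \<subseteq> G"
proof
  let ?f = "geodesic G i t j" and ?g = "geodesic G i t k" and ?xs = "merged_tree G i t j k"
  have r: "r \<le> t" and gr: "?g r = ?f r" using branch_depth_le[OF j k] geodesic_branch_depth[OF j k]
    unfolding r_def by auto
  have high: "?xs ! m = ?g (Suc r + (m - Suc t))" if "Suc t \<le> m" "m \<le> t + (t - r)" for m
    using merged_tree_nth_high[of t m G i j k] that unfolding r_def by simp
  fix e assume "e \<in> tree_edges (merge_parent t r) (t + (t - r)) ?xs"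
  then obtain m where m: "1 \<le> m" "m \<le> t + (t - r)" "e = {?xs ! m, ?xs ! merge_parent t r m}"
    unfolding tree_edges_def by auto
  consider "m \<le> t" | "m = Suc t" | "Suc t < m" by linarith
  then show "e \<in> G"
  proof cases
    case 1
    then have "e = {?f (m - 1), ?f (Suc (m - 1))}"
      using m by (simp add: merge_parent_def merged_tree_nth_low insert_commute)
    moreover have "m - 1 < t" using 1 m(1) by simp
    ultimately show ?thesis using geodesic_edge[OF j] by simp
  next
    case 2
    then have "e = {?g r, ?g (Suc r)}"
      using m r gr high[of m] by (simp add: merge_parent_def merged_tree_nth_low insert_commute)
    then show ?thesis using geodesic_edge[OF k] 2 m(2) by simp
  next
    case 3
    then have "e = {?g (r + (m - Suc t)), ?g (Suc (r + (m - Suc t)))}"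
      using m high[of m] high[of "m - 1"] by (simp add: merge_parent_def Suc_diff_Suc insert_commute)
    then show ?thesis using geodesic_edge[OF k] 3 m(2) by simp
  qed
qed

lemma card_nbhd_squared_le:
  assumes G: "G \<subseteq> Kn_edges n" and t: "1 \<le> t"
  shows "(card (nbhd G n t i))\<^sup>2
           \<le> (\<Sum>r\<in>{0..t}. card (open_trees G n i (t + (t - r)) (merge_parent t r)))"
proof -
  let ?N = "nbhd G n t i"
  let ?S = "Sigma {0..t} (\<lambda>r. open_trees G n i (t + (t - r)) (merge_parent t r))"
  let ?F = "\<lambda>(j, k). (branch_depth G i t j k, merged_tree G i t j k)"
  have "(card ?N)\<^sup>2 = card (?N \<times> ?N)" by (simp add: card_cartesian_product power2_eq_square)
  also have "\<dots> \<le> card ?S"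
  proof (rule card_inj_on_le)
    show "inj_on ?F (?N \<times> ?N)"
    proof (rule inj_onI, clarify)
      fix j k j' k' assume j: "j \<in> ?N" and k: "k \<in> ?N" and j': "j' \<in> ?N" and k': "k' \<in> ?N"
        and eq: "merged_tree G i t j k = merged_tree G i t j' k'"
      have "j = j'"
        using arg_cong[OF eq, of "\<lambda>xs. xs ! t"] geodesic_end[OF j] geodesic_end[OF j']
        by (simp add: merged_tree_nth_low)
      moreover have "k = k'" using arg_cong[OF eq, of last] last_merged_tree j k j' k' by metis
      ultimately show "j = j' \<and> k = k'" ..
    qed
    show "?F ` (?N \<times> ?N) \<subseteq> ?S"
      using merged_tree_in_rooted_lists[OF _ _ G t] tree_edges_merged_tree_subset branch_depth_le
      by (fastforce simp: open_trees_def)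
    show "finite ?S" by (auto intro: finite_open_trees)
  qed
  also have "\<dots> = (\<Sum>r\<in>{0..t}. card (open_trees G n i (t + (t - r)) (merge_parent t r)))"
    by (rule card_SigmaI) (auto intro: finite_open_trees)
  finally show ?thesis .
qed

subsection \<open>Moment bounds\<close>

lemma expectation_card_nbhd_le:
  assumes p: "\<And>e. e \<in> Kn_edges n \<Longrightarrow> 0 \<le> p e \<and> p e \<le> 1"
    and p_le: "\<And>e. e \<in> Kn_edges n \<Longrightarrow> p e \<le> q" and q: "0 \<le> q" and t: "1 \<le> t"
  shows "measure_pmf.expectation (random_graph n p) (\<lambda>G. real (card (nbhd G n t i)))
           \<le> (real n * q) ^ t"
proof -
  have "measure_pmf.expectation (random_graph n p) (\<lambda>G. real (card (nbhd G n t i)))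
      \<le> measure_pmf.expectation (random_graph n p)
          (\<lambda>G. real (card (open_trees G n i t (\<lambda>m. m - 1))))"
    using card_nbhd_le_card_open_paths[OF _ t] by (intro expectation_random_graph_mono) simp
  also have "\<dots> \<le> (real n * q) ^ t"
    by (rule expectation_card_open_trees_le[OF p p_le q]) auto
  finally show ?thesis .
qed

lemma expectation_card_nbhd_squared_le:
  assumes p: "\<And>e. e \<in> Kn_edges n \<Longrightarrow> 0 \<le> p e \<and> p e \<le> 1"
    and p_le: "\<And>e. e \<in> Kn_edges n \<Longrightarrow> p e \<le> q" and q: "0 \<le> q" and t: "1 \<le> t"
  shows "measure_pmf.expectation (random_graph n p) (\<lambda>G. (real (card (nbhd G n t i)))\<^sup>2)
           \<le> (\<Sum>r\<in>{0..t}. (real n * q) ^ (t + (t - r)))"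
proof -
  let ?trees = "\<lambda>G r. real (card (open_trees G n i (t + (t - r)) (merge_parent t r)))"
  have "measure_pmf.expectation (random_graph n p) (\<lambda>G. (real (card (nbhd G n t i)))\<^sup>2)
      \<le> measure_pmf.expectation (random_graph n p) (\<lambda>G. \<Sum>r\<in>{0..t}. ?trees G r)"
    using card_nbhd_squared_le[OF _ t] unfolding of_nat_power [symmetric] of_nat_sum [symmetric]
    by (intro expectation_random_graph_mono) (simp only: of_nat_le_iff)
  also have "\<dots> = (\<Sum>r\<in>{0..t}. measure_pmf.expectation (random_graph n p) (\<lambda>G. ?trees G r))"
    by (rule Bochner_Integration.integral_sum) (rule integrable_random_graph)
  also have "\<dots> \<le> (\<Sum>r\<in>{0..t}. (real n * q) ^ (t + (t - r)))"
    using merge_parent_less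
    by (intro sum_mono expectation_card_open_trees_le[OF p p_le q]) auto
  finally show ?thesis .
qed

lemma sum_power_le_geometric:
  fixes c :: real assumes c: "0 \<le> c" "c < 1"
  shows "(\<Sum>r\<in>{0..t}. c ^ (t + (t - r))) \<le> c ^ t / (1 - c)"
proof -
  have "(\<Sum>r\<in>{0..t}. c ^ (t + (t - r))) = c ^ t * (\<Sum>r<Suc t. c ^ r)"
    by (subst sum.atLeastAtMost_rev)
       (simp add: power_add sum_distrib_left atLeast0AtMost lessThan_Suc_atMost)
  also have "(\<Sum>r<Suc t. c ^ r) = (1 - c ^ Suc t) / (1 - c)"
    using geometric_sum[of c "Suc t"] c by (simp add: field_simps)
  also have "\<dots> \<le> 1 / (1 - c)" using c by (intro divide_right_mono) auto
  finally show ?thesis using c by (simp add: mult_left_mono)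
qed

theorem lemma6:
  fixes C :: real and \<alpha> :: "nat \<Rightarrow> real" and p :: "nat \<Rightarrow> nat set \<Rightarrow> real"
  assumes C_pos: "C > 0" and C_lt1: "C < 1"
    and \<alpha>_nonneg: "\<And>n. \<alpha> n \<ge> 0"
    and \<alpha>_lim: "\<alpha> \<longlonglongrightarrow> 0"
    and p_prob: "\<And>n e. e \<in> Kn_edges n \<Longrightarrow> 0 \<le> p n e \<and> p n e \<le> 1"
    and p_bounds: "\<And>n e. e \<in> Kn_edges n \<Longrightarrow>
                     (C - \<alpha> n) / real n \<le> p n e \<and> p n e \<le> (C + \<alpha> n) / real n"
  shows "\<exists>N::nat. N \<ge> 1 \<and> (\<forall>n\<ge>N. C + \<alpha> n < 1) \<and>
           (\<forall>n\<ge>N. \<forall>i\<in>{1..n}. \<forall>t\<in>{1..n}.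
              measure_pmf.expectation (random_graph n (p n))
                  (\<lambda>G. real (card (nbhd G n t i))) \<le> (C + \<alpha> n) ^ t \<and>
              measure_pmf.expectation (random_graph n (p n))
                  (\<lambda>G. (real (card (nbhd G n t i)))\<^sup>2)
                \<le> (C + \<alpha> n) ^ t / (1 - (C + \<alpha> n)))"
proof -
  obtain N0 where N0: "\<And>n. n \<ge> N0 \<Longrightarrow> \<alpha> n < 1 - C"
    using order_tendstoD(2)[OF \<alpha>_lim, of "1 - C"] C_lt1 unfolding eventually_sequentially by auto
  define N where "N = max 1 N0"
  have below_one: "C + \<alpha> n < 1" if "n \<ge> N" for n
    using N0[of n] that by (simp add: N_def)
  have bounds: "measure_pmf.expectation (random_graph n (p n))
                  (\<lambda>G. real (card (nbhd G n t i))) \<le> (C + \<alpha> n) ^ t \<and>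
                measure_pmf.expectation (random_graph n (p n))
                  (\<lambda>G. (real (card (nbhd G n t i)))\<^sup>2) \<le> (C + \<alpha> n) ^ t / (1 - (C + \<alpha> n))"
    if n: "n \<ge> N" and t: "1 \<le> t" for n i t
  proof -
    have c: "0 \<le> C + \<alpha> n" "C + \<alpha> n < 1" using C_pos \<alpha>_nonneg[of n] below_one[OF n] by auto
    have nq: "real n * ((C + \<alpha> n) / real n) = C + \<alpha> n" using n by (simp add: N_def)
    have q: "0 \<le> (C + \<alpha> n) / real n" using c by simp
    have p_n: "\<And>e. e \<in> Kn_edges n \<Longrightarrow> 0 \<le> p n e \<and> p n e \<le> 1" by (rule p_prob)
    have p_le: "\<And>e. e \<in> Kn_edges n \<Longrightarrow> p n e \<le> (C + \<alpha> n) / real n"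
      using p_bounds by blast
    show ?thesis
      using expectation_card_nbhd_le[where n = n and p = "p n" and i = i, OF p_n p_le q t]
        expectation_card_nbhd_squared_le[where n = n and p = "p n" and i = i, OF p_n p_le q t]
        sum_power_le_geometric[OF c, of t]
      unfolding nq by linarith
  qed
  show ?thesis using below_one bounds by (intro exI[of _ N]) (auto simp: N_def)
qed

end
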